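(* Let $\mathcal{L}_{\rm GM}$ be the golden mean language and let ${\rm S}:\mathcal{L}_{\rm GM}\to\mathbb{N}$ be a homomorphism. Write ${\rm S}_a={\rm S}(a)$, ${\rm S}_b={\rm S}(b)$, and suppose $\gcd({\rm S}_a,{\rm S}_b)=1$, ${\rm S}_a>1$ and ${\rm S}_b>1$. Then $\mathbb{N}\setminus {\rm S}(\mathcal{L}_{\rm GM})$ is finite and nonempty, and $$\max\,\big(\mathbb{N}\setminus {\rm S}(\mathcal{L}_{\rm GM})\big)={\rm S}_a({\rm S}_a-3)+{\rm S}_b({\rm S}_a-1).$$
   Context: $\mathbb{N}=\{1,2,3,\dots\}$. The golden mean language $\mathcal{L}_{\rm GM}$ is the set of all nonempty finite words over the alphabet $\{a,b\}$ in which $bb$ does not occur as a subword (factor). A homomorphism ${\rm S}:\mathcal{L}\to\mathbb{N}$ of a language $\mathcal{L}$ over an alphabet is a map with ${\rm S}(w_1w_2\cdots w_n)={\rm S}(w_1)+\cdots+{\rm S}(w_n)$ for every word $w_1\cdots w_n\in\mathcal{L}$ (equivalently ${\rm S}(vw)={\rm S}(v)+{\rm S}(w)$), so it is determined by the positive integers ${\rm S}(a),{\rm S}(b)$. *)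

theory Defs
  imports Main
begin

datatype letter = a | b

definition golden_mean_language :: "letter list set" where
  "golden_mean_language = {w. w \<noteq> [] \<and> (\<nexists>u v. w = u @ [b, b] @ v)}"

definition is_hom :: "letter list set \<Rightarrow> (letter list \<Rightarrow> nat) \<Rightarrow> bool" where
  "is_hom L S \<longleftrightarrow> (\<forall>w\<in>L. S w > 0) \<and>
     (\<forall>w\<in>L. S w = sum_list (map (\<lambda>x. S [x]) w))"

end

(*
  A word of the golden mean language with i letters a and j letters b exists iff
  j \<le> i + 1 (the b's must be separated by a's), so the value set is
  {i p + j q | j \<le> i + 1, (i, j) \<noteq> (0, 0)} with p = S(a), q = S(b).
  Write M = p (p - 3) + q (p - 1) = (p - 1)(p + q) - 2 p. Given n > M, take j \<equiv> n / q
  (mod p) with 0 \<le> j < p; then n = k p + j q and the bound on n forces k \<ge> j - 1.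
  Conversely, M = i p + j q would force j \<equiv> p - 1 (mod p), hence j \<ge> p - 1 and
  i \<ge> p - 2, giving i p + j q \<ge> M + p.
*)
theory Submission
  imports Defs "HOL-Library.Sublist" "HOL-Number_Theory.Cong"
begin

lemma letter_neq_a_iff [simp]: "x \<noteq> a \<longleftrightarrow> x = b"
  and letter_neq_b_iff [simp]: "x \<noteq> b \<longleftrightarrow> x = a"
  by (cases x; simp)+

abbreviation bb_free :: "letter list \<Rightarrow> bool" where
  "bb_free \<equiv> successively (\<lambda>x y. x = a \<or> y = a)"

lemma sublist_bb_iff_not_bb_free: "sublist [b, b] w \<longleftrightarrow> \<not> bb_free w"
proof (induction w)
  case (Cons x w)
  then show ?case
    by (cases w) (auto simp: sublist_Cons_right successively_Cons)
qed simp

lemma golden_mean_language_iff: "w \<in> golden_mean_language \<longleftrightarrow> w \<noteq> [] \<and> bb_free w"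
proof -
  have "(\<exists>u v. w = u @ [b, b] @ v) \<longleftrightarrow> sublist [b, b] w"
    by (auto simp: sublist_def)
  then show ?thesis
    by (auto simp: golden_mean_language_def sublist_bb_iff_not_bb_free)
qed

lemma count_b_le_Suc_count_a: "bb_free w \<Longrightarrow> count_list w b \<le> count_list w a + 1"
proof (induction w rule: induct_list012)
  case (3 x y w)
  then show ?case by (cases x; cases y) (auto simp: successively_Cons)
qed auto

lemma bb_free_word_exists:
  "j \<le> i + 1 \<Longrightarrow> \<exists>w. bb_free w \<and> count_list w a = i \<and> count_list w b = j"
proof (induction i arbitrary: j)
  case 0
  then consider "j = 0" | "j = 1" by linarith
  then show ?case
    by cases (intro exI[of _ "[]"] exI[of _ "[b]"]; simp)+
next
  case (Suc i)
  show ?case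
  proof (cases "j \<le> i + 1")
    case True
    with Suc.IH obtain w where "bb_free w" "count_list w a = i" "count_list w b = j"
      by blast
    then show ?thesis
      by (intro exI[of _ "a # w"]) (auto simp: successively_Cons)
  next
    case False
    with Suc.prems Suc.IH[of "i + 1"] obtain w where
      "bb_free w" "count_list w a = i" "count_list w b = j - 1"
      by auto
    with False show ?thesis
      by (intro exI[of _ "b # a # w"]) (auto simp: successively_Cons)
  qed
qed

lemma length_eq_count_letters: "length w = count_list w a + count_list w b"
proof (induction w)
  case (Cons x w)
  then show ?case by (cases x) auto
qed simp

lemma sum_list_map_letters:
  "sum_list (map f w) = count_list w a * f a + count_list w b * f b"
proof (induction w)
  case (Cons x w)
  then show ?case by (cases x) auto
qed simp

definition golden_frobenius :: "int \<Rightarrow> int \<Rightarrow> int" where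
  "golden_frobenius p q = p * (p - 3) + q * (p - 1)"

lemma golden_frobenius_pos:
  fixes p q :: int
  assumes "p > 1" "q > 1" "coprime p q"
  shows "golden_frobenius p q > 0"
proof (cases "p = 2")
  case True
  with assms have "q \<noteq> 2" by auto
  with assms True show ?thesis by (simp add: golden_frobenius_def)
next
  case False
  with assms have "p * (p - 3) \<ge> 0" "q * (p - 1) > 0" by simp_all
  then show ?thesis by (simp add: golden_frobenius_def)
qed

lemma golden_representation_above:
  fixes p q n :: int
  assumes p: "p > 1" and q: "q > 1" and cop: "coprime p q"
    and n: "n > golden_frobenius p q"
  shows "\<exists>i j. 0 \<le> i \<and> 0 \<le> j \<and> j \<le> i + 1 \<and> n = i * p + j * q"
proof -
  obtain x where x: "[q * x = 1] (mod p)"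
    using cong_solve_coprime_int cop coprime_commute by blast
  define j where "j = (n * x) mod p"
  have j: "0 \<le> j" "j \<le> p - 1"
    using p by (simp_all add: j_def)
  have "[j * q = n * x * q] (mod p)"
    unfolding j_def by (rule cong_scalar_right) simp
  also have "n * x * q = n * (q * x)"
    by (simp add: ac_simps)
  also have "[n * (q * x) = n * 1] (mod p)"
    using x by (rule cong_scalar_left)
  finally have "p dvd n - j * q"
    by (simp add: cong_iff_dvd_diff dvd_diff_commute)
  then obtain k where "n - j * q = p * k" ..
  then have k: "n = k * p + j * q"
    by (simp add: algebra_simps)
  have "j * (p + q) \<le> (p - 1) * (p + q)"
    using j p q by (intro mult_right_mono) auto
  with n k have "p * (j - 2) < p * k"
    by (simp add: golden_frobenius_def algebra_simps)
  with p have "j - 2 < k"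
    by simp
  moreover have "k \<noteq> -1 \<or> j \<noteq> 0"
    using golden_frobenius_pos[OF p q cop] n k p by auto
  ultimately show ?thesis
    using j k by (intro exI[of _ k] exI[of _ j]) auto
qed

lemma golden_frobenius_not_represented:
  fixes p q i j :: int
  assumes p: "p > 1" and q: "q > 1" and cop: "coprime p q"
    and ij: "0 \<le> i" "0 \<le> j" "j \<le> i + 1"
  shows "golden_frobenius p q \<noteq> i * p + j * q"
proof
  assume M: "golden_frobenius p q = i * p + j * q"
  then have "(j - (p - 1)) * q = p * (p - 3 - i)"
    by (simp add: golden_frobenius_def algebra_simps)
  then have "p dvd (j - (p - 1)) * q"
    by (metis dvd_triv_left)
  with cop obtain t where t: "j - (p - 1) = p * t"
    by (auto simp: coprime_dvd_mult_left_iff)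
  with p ij have "p * (-1) < p * t"
    by simp
  with p have "0 \<le> t"
    by (simp only: mult_less_cancel_left_pos)
  with p have "0 \<le> p * t"
    by simp
  with t have j: "p - 1 \<le> j"
    by linarith
  with ij have i: "p - 2 \<le> i"
    by simp
  have "(p - 2) * p + (p - 1) * q \<le> i * p + j * q"
    using i j p q by (intro add_mono mult_right_mono) auto
  with M p show False
    by (simp add: golden_frobenius_def algebra_simps)
qed

definition golden_mean_values :: "nat \<Rightarrow> nat \<Rightarrow> nat set" where
  "golden_mean_values p q = {i * p + j * q | i j. j \<le> i + 1 \<and> 0 < i + j}"

lemma image_golden_mean_language:
  assumes "is_hom golden_mean_language S"
  shows "S ` golden_mean_language = golden_mean_values (S [a]) (S [b])"
proof (intro equalityI subsetI)
  have S: "S w = count_list w a * S [a] + count_list w b * S [b]"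
    if "w \<in> golden_mean_language" for w
    using assms that by (simp add: is_hom_def sum_list_map_letters)
  fix n
  show "n \<in> golden_mean_values (S [a]) (S [b])" if "n \<in> S ` golden_mean_language"
  proof -
    from that obtain w where w: "w \<in> golden_mean_language" "n = S w"
      by blast
    then have "w \<noteq> []" "bb_free w"
      by (simp_all add: golden_mean_language_iff)
    then have "count_list w b \<le> count_list w a + 1" "0 < count_list w a + count_list w b"
      using count_b_le_Suc_count_a[of w] by (auto simp flip: length_eq_count_letters)
    then show ?thesis
      unfolding golden_mean_values_def using w S by blast
  qed
  show "n \<in> S ` golden_mean_language" if "n \<in> golden_mean_values (S [a]) (S [b])"
  proof -
    from that obtain i j where ij: "j \<le> i + 1" "0 < i + j" "n = i * S [a] + j * S [b]"
      by (auto simp: golden_mean_values_def)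
    then obtain w where w: "bb_free w" "count_list w a = i" "count_list w b = j"
      using bb_free_word_exists by blast
    with ij(2) have "w \<in> golden_mean_language"
      using length_eq_count_letters[of w] by (auto simp: golden_mean_language_iff)
    with w ij(3) S show ?thesis
      by force
  qed
qed

lemma above_frobenius_in_golden_mean_values:
  fixes p q n :: nat
  assumes "p > 1" "q > 1" "coprime p q"
    and "int n > golden_frobenius (int p) (int q)"
  shows "n \<in> golden_mean_values p q"
proof -
  have "coprime (int p) (int q)"
    using assms by simp
  with assms obtain i j where ij: "0 \<le> i" "0 \<le> j" "j \<le> i + 1" "int n = i * int p + j * int q"
    using golden_representation_above[of "int p" "int q" "int n"] by auto
  then have "int n = int (nat i * p + nat j * q)"
    by simp
  then have "n = nat i * p + nat j * q"
    by (simp only: of_nat_eq_iff)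
  moreover have "n > 0"
    using assms golden_frobenius_pos[of "int p" "int q"] by simp
  moreover have "nat j \<le> nat i + 1"
    using ij by simp
  ultimately show ?thesis
    unfolding golden_mean_values_def by fastforce
qed

lemma frobenius_not_in_golden_mean_values:
  fixes p q :: nat
  assumes "p > 1" "q > 1" "coprime p q"
  shows "nat (golden_frobenius (int p) (int q)) \<notin> golden_mean_values p q"
proof
  let ?M = "golden_frobenius (int p) (int q)"
  assume "nat ?M \<in> golden_mean_values p q"
  then obtain i j where ij: "j \<le> i + 1" "nat ?M = i * p + j * q"
    by (auto simp: golden_mean_values_def)
  have "?M > 0"
    using assms golden_frobenius_pos[of "int p" "int q"] by simp
  then have "?M = int (nat ?M)"
    by simp
  with ij(2) have "?M = int i * int p + int j * int q"
    by simp
  then show False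
    using assms ij golden_frobenius_not_represented[of "int p" "int q" "int i" "int j"] by simp
qed

lemma golden_mean_values_gaps:
  fixes p q :: nat
  assumes "p > 1" "q > 1" "coprime p q"
  defines "M \<equiv> golden_frobenius (int p) (int q)"
  shows "finite ({1..} - golden_mean_values p q) \<and> {1..} - golden_mean_values p q \<noteq> {} \<and>
         int (Max ({1..} - golden_mean_values p q)) = M"
proof -
  let ?G = "{1..} - golden_mean_values p q"
  have "M > 0"
    using assms golden_frobenius_pos[of "int p" "int q"] by simp
  have "?G \<subseteq> {1..nat M}"
    using above_frobenius_in_golden_mean_values[OF assms(1-3)] by (force simp: M_def)
  moreover have "nat M \<in> ?G"
    using frobenius_not_in_golden_mean_values[OF assms(1-3)] \<open>M > 0\<close> by (simp add: M_def)
  ultimately have "finite ?G" "Max ?G = nat M"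
    using finite_subset by (auto intro!: Max_eqI)
  with \<open>nat M \<in> ?G\<close> \<open>M > 0\<close> show ?thesis
    by auto
qed

theorem theorem1:
  fixes S :: "letter list \<Rightarrow> nat"
  assumes "is_hom golden_mean_language S"
    and "coprime (S [a]) (S [b])"
    and "S [a] > 1" and "S [b] > 1"
  shows "finite ({1..} - S ` golden_mean_language) \<and>
         {1..} - S ` golden_mean_language \<noteq> {} \<and>
         int (Max ({1..} - S ` golden_mean_language)) =
           int (S [a]) * (int (S [a]) - 3) + int (S [b]) * (int (S [a]) - 1)"
  using golden_mean_values_gaps[OF assms(3,4,2)]
  by (simp add: image_golden_mean_language[OF assms(1)] golden_frobenius_def)

end
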